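(* Let $\Omega_1,\Omega_2\subset\mathbb R^n$ be open bounded sets and let $F_j,F:\overline{\Omega}_1\to\overline{\Omega}_2$, $j\ge1$, satisfy: (i) $\sup_{j\ge1}\mathrm{Lip}(F_j,\Omega_1)<\infty$; (ii) $F|_{\Omega_1}$ and $F_j|_{\Omega_1}$ are invertible for all $j\ge1$; (iii) $F_j\to F$ pointwise in $\Omega_1$; (iv) $F_j(\partial\Omega_1)\subset\partial\Omega_2$ and $F_j(\Omega_1)=\Omega_2$ for all $j\ge1$, and $F(\Omega_1)=\Omega_2$. Then $F_j^{-1}\to F^{-1}$ pointwise in $\Omega_2$, where $F_j^{-1},F^{-1}:\Omega_2\to\Omega_1$ denote the inverses of $F_j|_{\Omega_1}$ and $F|_{\Omega_1}$.
   Context: $\mathrm{Lip}(G,\Omega_1)$ denotes the Lipschitz constant of $G$ on $\Omega_1$. *)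

theory Defs
  imports "HOL-Analysis.Analysis"
begin

end

theory Submission
  imports Defs "HOL-Homology.Invariance_of_Domain" "HOL-Library.Infinite_Set"
begin

text \<open>
  Fix \<open>y \<in> \<Omega>2\<close> and let \<open>x\<^sub>j\<close> be its preimage under \<open>F\<^sub>j\<close>. The \<open>x\<^sub>j\<close> lie in the
  compact set \<open>closure \<Omega>1\<close>, so it suffices to show that every limit \<open>l\<close> of a subsequence is
  the preimage of \<open>y\<close> under \<open>F\<close>. If \<open>l \<in> \<Omega>1\<close>, the uniform Lipschitz bound gives
  \<open>F\<^sub>j l \<approx> F\<^sub>j x\<^sub>j = y\<close> along the subsequence, while \<open>F\<^sub>j l \<rightarrow> F l\<close>, so \<open>F l = y\<close>.
  The case \<open>l \<in> frontier \<Omega>1\<close> cannot occur: by invariance of domain each \<open>F\<^sub>j\<close> is a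
  homeomorphism of \<open>\<Omega>1\<close> onto \<open>\<Omega>2\<close>, so the preimage of a ball \<open>cball y d \<subseteq> \<Omega>2\<close> is a
  compact subset of \<open>\<Omega>1\<close>, and the Lipschitz bound then forces \<open>dist x\<^sub>j (frontier \<Omega>1) \<ge> d / L\<close>.
\<close>

lemma LIMSEQ_if_subseq_limits_eq:
  fixes X :: "nat \<Rightarrow> 'a::metric_space"
  assumes "compact K" "\<And>n. X n \<in> K"
    and subseq_limit: "\<And>r l. strict_mono r \<Longrightarrow> (X \<circ> r) \<longlonglongrightarrow> l \<Longrightarrow> l = x"
  shows "X \<longlonglongrightarrow> x"
proof (rule ccontr)
  assume "\<not> X \<longlonglongrightarrow> x"
  then obtain e where "e > 0" and "infinite {n. e \<le> dist (X n) x}"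
    unfolding lim_sequentially infinite_nat_iff_unbounded_le by (auto simp: not_less)
  then obtain r :: "nat \<Rightarrow> nat" where r: "strict_mono r" and far: "\<And>n. e \<le> dist (X (r n)) x"
    using infinite_enumerate by blast
  have "\<forall>n. (X \<circ> r) n \<in> K" using assms(2) by simp
  then obtain l r' where r': "strict_mono r'" and lim: "(X \<circ> r \<circ> r') \<longlonglongrightarrow> l"
    using seq_compactE[OF compact_imp_seq_compact[OF \<open>compact K\<close>]] by blast
  have "l = x"
    using subseq_limit[OF strict_mono_o[OF r r']] lim by (simp add: o_assoc)
  with lim have "(\<lambda>n. dist ((X \<circ> r \<circ> r') n) x) \<longlonglongrightarrow> 0"
    by (simp only: tendsto_dist_iff[symmetric])
  moreover have "\<forall>\<^sub>F n in sequentially. e \<le> dist ((X \<circ> r \<circ> r') n) x"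
    using far by simp
  ultimately have "e \<le> 0"
    by (rule tendsto_lowerbound) simp
  with \<open>e > 0\<close> show False by simp
qed

lemma compact_preimage_inj_open:
  fixes h :: "'a::euclidean_space \<Rightarrow> 'a"
  assumes "open S" "continuous_on S h" "inj_on h S" "compact C" "C \<subseteq> h ` S"
  shows "compact (S \<inter> h -` C)"
proof -
  have "continuous_on (h ` S) (inv_into S h)"
    using continuous_on_inverse_open[OF assms(1,2)] assms(3) by auto
  then have "compact (inv_into S h ` C)"
    using assms(4,5) by (meson compact_continuous_image continuous_on_subset)
  moreover have "inv_into S h ` C = S \<inter> h -` C"
  proof
    show "inv_into S h ` C \<subseteq> S \<inter> h -` C"
    proof clarify
      fix c assume "c \<in> C"
      with assms(5) have "c \<in> h ` S" by blast
      with \<open>c \<in> C\<close> show "inv_into S h c \<in> S \<inter> h -` C"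
        by (simp add: inv_into_into f_inv_into_f)
    qed
    show "S \<inter> h -` C \<subseteq> inv_into S h ` C"
    proof
      fix x assume x: "x \<in> S \<inter> h -` C"
      with assms(3) have "x = inv_into S h (h x)" by simp
      moreover from x have "h x \<in> C" by simp
      ultimately show "x \<in> inv_into S h ` C" by (rule image_eqI)
    qed
  qed
  ultimately show ?thesis by simp
qed

lemma lipschitz_inj_open_dist_frontier_ge:
  fixes h :: "'a::euclidean_space \<Rightarrow> 'a"
  assumes "open S" "L-lipschitz_on S h" "inj_on h S" "cball (h x) d \<subseteq> h ` S"
    and "x \<in> S" "z \<in> frontier S"
  shows "d \<le> L * dist x z"
proof (rule ccontr)
  assume "\<not> d \<le> L * dist x z"
  have "z \<in> closure S" "z \<notin> S"
    using assms(1,6) by (simp_all add: frontier_def interior_open)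
  have "L \<ge> 0" using lipschitz_on_nonneg[OF assms(2)] .
  define K where "K = S \<inter> h -` cball (h x) d"
  have "closed K"
    unfolding K_def using assms(1,3,4) lipschitz_on_continuous_on[OF assms(2)]
    by (intro compact_imp_closed compact_preimage_inj_open) auto
  obtain p where p: "\<And>n. p n \<in> S" "p \<longlonglongrightarrow> z"
    using \<open>z \<in> closure S\<close> closure_sequential by blast
  have "(\<lambda>n. L * (dist (p n) z + dist z x)) \<longlonglongrightarrow> L * (0 + dist z x)"
    using p(2) by (intro tendsto_intros) (simp add: tendsto_dist_iff[symmetric])
  then have close: "\<forall>\<^sub>F n in sequentially. L * (dist (p n) z + dist z x) < d"
    using \<open>\<not> d \<le> L * dist x z\<close> by (intro order_tendstoD) (auto simp: dist_commute)
  have bound: "dist (h (p n)) (h x) \<le> L * (dist (p n) z + dist z x)" for n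
    using lipschitz_onD[OF assms(2) p(1) assms(5)] dist_triangle[of "p n" x z] \<open>L \<ge> 0\<close>
    by (meson mult_left_mono order_trans)
  from close have "\<forall>\<^sub>F n in sequentially. p n \<in> K"
  proof (rule eventually_mono)
    fix n assume "L * (dist (p n) z + dist z x) < d"
    with bound[of n] p(1)[of n] show "p n \<in> K"
      unfolding K_def by (simp add: dist_commute)
  qed
  then have "z \<in> K"
    using Lim_in_closed_set[OF \<open>closed K\<close> _ trivial_limit_sequentially p(2)] by simp
  with \<open>z \<notin> S\<close> show False unfolding K_def by simp
qed

lemma uniformly_lipschitz_inj_limit_preimage_in:
  fixes G :: "nat \<Rightarrow> 'a::euclidean_space \<Rightarrow> 'a"
  assumes "open S" "open T" "\<And>j. L-lipschitz_on S (G j)" "\<And>j. inj_on (G j) S" "\<And>j. G j ` S = T"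
    and "\<And>j. X j \<in> S" "\<And>j. G j (X j) = y" "X \<longlonglongrightarrow> l"
  shows "l \<in> S"
proof (rule ccontr)
  assume "l \<notin> S"
  have "y \<in> T" using imageI[OF assms(6)[of 0], of "G 0"] by (simp add: assms(5,7))
  then obtain d where "d > 0" "cball y d \<subseteq> T" using \<open>open T\<close> open_contains_cball by blast
  have "l \<in> closure S" using closure_sequential assms(6,8) by blast
  with \<open>l \<notin> S\<close> \<open>open S\<close> have "l \<in> frontier S" by (simp add: frontier_def interior_open)
  have frontier_gap: "d \<le> L * dist (X j) l" for j
  proof (rule lipschitz_inj_open_dist_frontier_ge[OF assms(1,3,4) _ assms(6) \<open>l \<in> frontier S\<close>])
    show "cball (G j (X j)) d \<subseteq> G j ` S" using \<open>cball y d \<subseteq> T\<close> by (simp add: assms(5,7))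
  qed
  have "(\<lambda>j. L * dist (X j) l) \<longlonglongrightarrow> 0"
    using tendsto_mult_right_zero[OF tendsto_dist_iff[THEN iffD1, OF assms(8)]] .
  then have "d \<le> 0"
    by (rule tendsto_lowerbound) (simp_all add: frontier_gap)
  with \<open>d > 0\<close> show False by simp
qed

lemma uniformly_lipschitz_limit_preimage:
  fixes G :: "nat \<Rightarrow> 'a::metric_space \<Rightarrow> 'b::metric_space"
  assumes "\<And>j. L-lipschitz_on S (G j)" "\<And>j. X j \<in> S" "\<And>j. G j (X j) = y"
    and "X \<longlonglongrightarrow> l" "l \<in> S" "(\<lambda>j. G j l) \<longlonglongrightarrow> g"
  shows "g = y"
proof -
  have bound: "dist (G j l) y \<le> L * dist (X j) l" for j
    using lipschitz_onD[OF assms(1)[of j] assms(5) assms(2)[of j]] assms(3)[of j]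
    by (simp add: dist_commute)
  have "(\<lambda>j. L * dist (X j) l) \<longlonglongrightarrow> 0"
    using tendsto_mult_right_zero[OF tendsto_dist_iff[THEN iffD1, OF assms(4)]] .
  then have "(\<lambda>j. dist (G j l) y) \<longlonglongrightarrow> 0"
  proof (rule tendsto_sandwich[OF _ _ tendsto_const, rotated 2])
    show "\<forall>\<^sub>F j in sequentially. 0 \<le> dist (G j l) y" by simp
    show "\<forall>\<^sub>F j in sequentially. dist (G j l) y \<le> L * dist (X j) l" using bound by simp
  qed
  then have "(\<lambda>j. G j l) \<longlonglongrightarrow> y" by (rule tendsto_dist_iff[THEN iffD2])
  with assms(6) show ?thesis using LIMSEQ_unique by blast
qed

theorem lemma3p2:
  fixes \<Omega>1 \<Omega>2 :: "'a::euclidean_space set"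
    and Fs :: "nat \<Rightarrow> 'a \<Rightarrow> 'a" and F :: "'a \<Rightarrow> 'a"
  assumes "open \<Omega>1" "bounded \<Omega>1" "open \<Omega>2" "bounded \<Omega>2"
    and "\<And>j. Fs j ` closure \<Omega>1 \<subseteq> closure \<Omega>2"
    and "F ` closure \<Omega>1 \<subseteq> closure \<Omega>2"
    and "\<exists>L. \<forall>j. L-lipschitz_on \<Omega>1 (Fs j)"
    and "inj_on F \<Omega>1" "\<And>j. inj_on (Fs j) \<Omega>1"
    and "\<And>x. x \<in> \<Omega>1 \<Longrightarrow> (\<lambda>j. Fs j x) \<longlonglongrightarrow> F x"
    and "\<And>j. Fs j ` frontier \<Omega>1 \<subseteq> frontier \<Omega>2"
    and "\<And>j. Fs j ` \<Omega>1 = \<Omega>2"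
    and "F ` \<Omega>1 = \<Omega>2"
  shows "\<forall>y\<in>\<Omega>2. (\<lambda>j. inv_into \<Omega>1 (Fs j) y) \<longlonglongrightarrow> inv_into \<Omega>1 F y"
proof
  fix y assume "y \<in> \<Omega>2"
  obtain L where L: "\<And>j. L-lipschitz_on \<Omega>1 (Fs j)" using assms(7) by blast
  define X where "X j = inv_into \<Omega>1 (Fs j) y" for j
  have X: "X j \<in> \<Omega>1" "Fs j (X j) = y" for j
    unfolding X_def using \<open>y \<in> \<Omega>2\<close> assms(12) by (auto intro: inv_into_into f_inv_into_f)
  show "X \<longlonglongrightarrow> inv_into \<Omega>1 F y"
  proof (rule LIMSEQ_if_subseq_limits_eq[OF compact_closure[THEN iffD2, OF assms(2)]])
    show "X n \<in> closure \<Omega>1" for n using X(1) closure_subset by blast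
    fix r l assume r: "strict_mono r" and "(X \<circ> r) \<longlonglongrightarrow> l"
    then have lim: "(\<lambda>k. X (r k)) \<longlonglongrightarrow> l" by (simp add: o_def)
    have "l \<in> \<Omega>1"
      using uniformly_lipschitz_inj_limit_preimage_in[where G = "\<lambda>k. Fs (r k)", OF assms(1,3) L
          assms(9) assms(12) X(1) X(2) lim] .
    moreover have "(\<lambda>k. Fs (r k) l) \<longlonglongrightarrow> F l"
      using LIMSEQ_subseq_LIMSEQ[OF assms(10)[OF \<open>l \<in> \<Omega>1\<close>] r] by (simp add: o_def)
    ultimately have "F l = y"
      using uniformly_lipschitz_limit_preimage[where G = "\<lambda>k. Fs (r k)", OF L X(1) X(2) lim] by blast
    then show "l = inv_into \<Omega>1 F y"
      using \<open>l \<in> \<Omega>1\<close> assms(8) inv_into_f_f by metis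
  qed
qed

end
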